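(* Let $0<\delta<\tfrac12$, $|\nu|<1-2\delta$, $|\mu|<1$, and let $m\ge1$. Set $\delta_1=\frac{2\delta}{1+\nu}$ and $\delta_4=\frac{2\delta}{1-\nu}$. Then $$\frac{1}{|\log(1-\delta)|}>\frac{1}{|\log(1-\delta_1)|}+\frac{1}{|\log(1-\delta_4)|},$$ and consequently $$\frac{\log\big[\frac m2(1+\mu)\big]}{|\log(1-\delta_1)|}+\frac{\log\big[\frac m2(1-\mu)\big]}{|\log(1-\delta_4)|}<\frac{\log m}{|\log(1-\delta)|}.$$
   Context: $\log$ is the natural logarithm. The left-hand side of the second inequality is the sum of the bounds $\log(\#\text{rows})/|\log(1-\text{density})|$ applied separately to the two diagonal blocks of a perfectly block-diagonal $0$-$1$ matrix whose diagonal blocks have $\frac m2(1\pm\mu)$ rows, $\frac n2(1\pm\nu)$ columns and row densities $\delta_1,\delta_4$, while the right-hand side is the same bound for the whole matrix with density $\delta$. *)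

theory Defs
  imports "HOL-Analysis.Analysis"
begin

end

theory Submission
  imports Defs
begin

(* Write L(x) = -ln(1 - x) = |ln(1 - x)| for 0 < x < 1.  The proof rests on one analytic fact:
   the chord slope L(x)/x of the convex function L, which vanishes at 0, is strictly
   increasing on (0,1).  Since delta_1 and delta_4 both lie in (delta,1) and their harmonic
   combination satisfies 1/delta_1 + 1/delta_4 = 1/delta, writing
     1/L(delta) = (1/delta_1 + 1/delta_4) * (delta/L(delta))
   and bounding delta/L(delta) > delta_i/L(delta_i) gives the first inequality.
   The second follows by splitting ln(m/2 (1 +- mu)) = ln m + ln((1 +- mu)/2), where the
   second summands are negative, and using the first inequality with ln m >= 0.
   The file proves: the tangent-line bound for ln, the chord-slope monotonicity, the
   harmonic splitting inequality for L, the facts about delta_1 and delta_4, and the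
   weighted logarithm inequality; the main theorem combines them. *)

lemma ln_less_minus_one:
  fixes s :: real
  assumes "0 < s" and "s \<noteq> 1"
  shows "ln s < s - 1"
  using ln_le_minus_one[of s] ln_eq_minus_one[of s] assms by fastforce

lemma abs_ln_one_minus:
  fixes x :: real
  assumes "0 < x" and "x < 1"
  shows "\<bar>ln (1 - x)\<bar> = - ln (1 - x)"
  using assms by simp

lemma chord_slope_strict_mono:
  fixes x y :: real
  assumes "0 < x" and "x < y" and "y < 1"
  shows "- ln (1 - x) / x < - ln (1 - y) / y"
proof -
  define A where "A = - ln (1 - x)"
  have "ln (1 / (1 - x)) < 1 / (1 - x) - 1"
    using assms by (intro ln_less_minus_one) auto
  then have A_bound: "A < x / (1 - x)"
    using assms by (simp add: A_def ln_div field_simps)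
  \<comment> \<open>the value at \<open>y\<close> lies above the tangent line of \<open>-ln (1 - t)\<close> at \<open>t = x\<close>\<close>
  have "ln ((1 - y) / (1 - x)) < (1 - y) / (1 - x) - 1"
    using assms by (intro ln_less_minus_one) auto
  then have tangent: "A + (y - x) / (1 - x) < - ln (1 - y)"
    using assms by (simp add: A_def ln_div field_simps)
  have "(y - x) * A < (y - x) * (x / (1 - x))"
    using A_bound assms by (intro mult_strict_left_mono) auto
  then have "(y - x) * A / x < (y - x) / (1 - x)"
    using assms by (simp add: field_simps)
  moreover have "y * (A / x) = A + (y - x) * A / x"
    using assms by (simp add: field_simps)
  ultimately have "y * (A / x) < - ln (1 - y)"
    using tangent by linarith
  then show ?thesis
    using assms by (simp add: A_def field_simps)
qed

lemma harmonic_split_inequality: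
  fixes d a b :: real
  assumes "0 < d" and "d < a" and "a < 1" and "d < b" and "b < 1"
    and harmonic: "1 / a + 1 / b = 1 / d"
  shows "1 / (- ln (1 - a)) + 1 / (- ln (1 - b)) < 1 / (- ln (1 - d))"
proof -
  have L_pos: "0 < - ln (1 - t)" if "0 < t" "t < 1" for t :: real
    using that by simp
  have slope_a: "a / (- ln (1 - a)) < d / (- ln (1 - d))"
    using chord_slope_strict_mono[of d a] assms L_pos[of d] L_pos[of a]
    by (simp add: field_simps)
  have slope_b: "b / (- ln (1 - b)) < d / (- ln (1 - d))"
    using chord_slope_strict_mono[of d b] assms L_pos[of d] L_pos[of b]
    by (simp add: field_simps)
  have "1 / (- ln (1 - a)) = (1 / a) * (a / (- ln (1 - a)))"
    using assms by simp
  also have "\<dots> < (1 / a) * (d / (- ln (1 - d)))"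
    using slope_a assms by (intro mult_strict_left_mono) auto
  finally have part_a: "1 / (- ln (1 - a)) < (1 / a) * (d / (- ln (1 - d)))" .
  have "1 / (- ln (1 - b)) = (1 / b) * (b / (- ln (1 - b)))"
    using assms by simp
  also have "\<dots> < (1 / b) * (d / (- ln (1 - d)))"
    using slope_b assms by (intro mult_strict_left_mono) auto
  finally have part_b: "1 / (- ln (1 - b)) < (1 / b) * (d / (- ln (1 - d)))" .
  have "(1 / a) * (d / (- ln (1 - d))) + (1 / b) * (d / (- ln (1 - d)))
      = (1 / a + 1 / b) * (d / (- ln (1 - d)))"
    by (rule distrib_right[symmetric])
  also have "\<dots> = 1 / (- ln (1 - d))"
    using harmonic assms by simp
  finally show ?thesis
    using part_a part_b by linarith
qed

lemma block_densities:
  fixes d \<nu> :: real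
  assumes "0 < d" and "\<bar>\<nu>\<bar> < 1 - 2 * d"
  shows "d < 2 * d / (1 + \<nu>)" and "2 * d / (1 + \<nu>) < 1"
    and "d < 2 * d / (1 - \<nu>)" and "2 * d / (1 - \<nu>) < 1"
    and "1 / (2 * d / (1 + \<nu>)) + 1 / (2 * d / (1 - \<nu>)) = 1 / d"
proof -
  have plus: "2 * d < 1 + \<nu>" and minus: "2 * d < 1 - \<nu>"
    using assms(2) by auto
  have "\<nu> < 1" and "- \<nu> < 1"
    using assms by auto
  then have "d * \<nu> < d * 1" and "d * (- \<nu>) < d * 1"
    using assms(1) by (intro mult_strict_left_mono; simp)+
  then show "d < 2 * d / (1 + \<nu>)" "2 * d / (1 + \<nu>) < 1"
      "d < 2 * d / (1 - \<nu>)" "2 * d / (1 - \<nu>) < 1"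
    using plus minus assms(1) by (auto simp: field_simps)
  show "1 / (2 * d / (1 + \<nu>)) + 1 / (2 * d / (1 - \<nu>)) = 1 / d"
    using plus minus assms(1) by (simp add: field_simps)
qed

lemma weighted_log_split:
  fixes m p q u v w :: real
  assumes "1 \<le> m" and "0 < p" "p < 1" and "0 < q" "q < 1"
    and "0 < u" and "0 < v" and "u + v \<le> w"
  shows "ln (m * p) * u + ln (m * q) * v < ln m * w"
proof -
  have "ln (m * p) = ln m + ln p" and "ln (m * q) = ln m + ln q"
    using assms by (simp_all add: ln_mult)
  moreover have "ln p * u < 0" and "ln q * v < 0"
    using assms by (simp_all add: mult_neg_pos)
  moreover have "ln m * (u + v) \<le> ln m * w"
    using assms by (intro mult_left_mono) auto
  ultimately show ?thesis
    by (simp add: ring_distribs)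
qed

theorem mainTheorem7:
  fixes \<delta> \<nu> \<mu> \<delta>\<^sub>1 \<delta>\<^sub>4 :: real and m :: nat
  assumes "0 < \<delta>" and "\<delta> < 1/2"
    and "\<bar>\<nu>\<bar> < 1 - 2*\<delta>" and "\<bar>\<mu>\<bar> < 1" and "m \<ge> 1"
    and "\<delta>\<^sub>1 = 2*\<delta> / (1 + \<nu>)" and "\<delta>\<^sub>4 = 2*\<delta> / (1 - \<nu>)"
  shows "1 / \<bar>ln (1 - \<delta>)\<bar> > 1 / \<bar>ln (1 - \<delta>\<^sub>1)\<bar> + 1 / \<bar>ln (1 - \<delta>\<^sub>4)\<bar>
    \<and> ln (real m / 2 * (1 + \<mu>)) / \<bar>ln (1 - \<delta>\<^sub>1)\<bar>
          + ln (real m / 2 * (1 - \<mu>)) / \<bar>ln (1 - \<delta>\<^sub>4)\<bar>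
         < ln (real m) / \<bar>ln (1 - \<delta>)\<bar>"
proof -
  note densities = block_densities[OF assms(1,3), folded assms(6,7)]
  have abs_eqs: "\<bar>ln (1 - \<delta>)\<bar> = - ln (1 - \<delta>)"
      "\<bar>ln (1 - \<delta>\<^sub>1)\<bar> = - ln (1 - \<delta>\<^sub>1)" "\<bar>ln (1 - \<delta>\<^sub>4)\<bar> = - ln (1 - \<delta>\<^sub>4)"
    using abs_ln_one_minus densities assms(1,2) by auto
  have first: "1 / (- ln (1 - \<delta>\<^sub>1)) + 1 / (- ln (1 - \<delta>\<^sub>4)) < 1 / (- ln (1 - \<delta>))"
    using harmonic_split_inequality densities assms(1) by blast
  have "ln (real m * ((1 + \<mu>) / 2)) * (1 / (- ln (1 - \<delta>\<^sub>1)))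
      + ln (real m * ((1 - \<mu>) / 2)) * (1 / (- ln (1 - \<delta>\<^sub>4)))
      < ln (real m) * (1 / (- ln (1 - \<delta>)))"
    using first densities assms(1,4,5)
    by (intro weighted_log_split) (auto simp: abs_less_iff)
  then have second: "ln (real m / 2 * (1 + \<mu>)) / (- ln (1 - \<delta>\<^sub>1))
      + ln (real m / 2 * (1 - \<mu>)) / (- ln (1 - \<delta>\<^sub>4)) < ln (real m) / (- ln (1 - \<delta>))"
    by (simp add: mult.commute)
  show ?thesis
    using first second unfolding abs_eqs by simp
qed

end
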